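(* Let $(X,\tau)$ be a point-separable topological vector space over $\mathbb{R}$. Then $X$ has the fixed point property: for every nonempty, compact, convex subset $C\subseteq X$ and every $\tau$-continuous mapping $f:C\to C$, there exists $x_0\in C$ with $f(x_0)=x_0$.
   Context: All vector spaces are real; $\theta$ denotes the origin of $X$ and $X^*$ denotes the space of linear $\tau$-continuous functionals on $X$. The space $(X,\tau)$ is called point-separable if there is a subset $V\subseteq X^*$ such that, for $x\in X$, $v(x)=0$ for every $v\in V$ implies $x=\theta$. *)

theory Defs
  imports "HOL-Analysis.Analysis"
begin

definition tvs :: "'a::real_vector topology \<Rightarrow> bool" where
  "tvs tau \<longleftrightarrow> topspace tau = UNIV
     \<and> continuous_map (prod_topology tau tau) tau (\<lambda>(x, y). x + y)
     \<and> continuous_map (prod_topology euclideanreal tau) tau (\<lambda>(a, x). a *\<^sub>R x)"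

definition dual_space :: "'a::real_vector topology \<Rightarrow> ('a \<Rightarrow> real) set" where
  "dual_space tau = {v. linear v \<and> continuous_map tau euclideanreal v}"

definition point_separable :: "'a::real_vector topology \<Rightarrow> bool" where
  "point_separable tau \<longleftrightarrow>
     (\<exists>V. V \<subseteq> dual_space tau \<and> (\<forall>x. (\<forall>v\<in>V. v x = 0) \<longrightarrow> x = 0))"

end

theory Submission
  imports Defs "HOL-Homology.Simplices"
begin

text \<open>If \<open>f\<close> had no fixed point on \<open>C\<close>, compactness would give finitely many separating
  functionals \<open>v\<^sub>1, \<dots>, v\<^sub>k\<close> such that the pseudometric \<open>\<rho>(x, y) = \<Sum>\<^sub>i \<bar>v\<^sub>i x - v\<^sub>i y\<bar>\<close>
  satisfies \<open>\<rho>(x, f x) \<ge> e > 0\<close> on \<open>C\<close>. But a partition of unity on \<open>C\<close> subordinate to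
  \<open>\<rho>\<close>-balls of radius \<open>e/2\<close> around finitely many points \<open>z\<^sub>j\<close> maps \<open>C\<close> into a standard simplex,
  and Brouwer's theorem for that simplex yields a fixed point of
  \<open>q \<mapsto> \<phi>(f(\<Sum>\<^sub>j q\<^sub>j z\<^sub>j))\<close>; since the \<open>v\<^sub>i\<close> are linear, \<open>x = \<Sum>\<^sub>j q\<^sub>j z\<^sub>j\<close> then satisfies
  \<open>\<rho>(x, f x) \<le> e/2\<close>. The simplex dimension depends on \<open>C\<close> and \<open>f\<close>, so Brouwer's theorem is
  needed for simplices in \<open>nat \<Rightarrow> real\<close> of every dimension, not just for a fixed Euclidean type;
  it is derived from Kuhn's combinatorial lemma for cubes.\<close>

section \<open>Brouwer's fixed point theorem in every finite dimension\<close>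

definition cube :: "nat \<Rightarrow> (nat \<Rightarrow> real) set" where
  "cube n = {x. (\<forall>i<n. 0 \<le> x i \<and> x i \<le> 1) \<and> (\<forall>i\<ge>n. x i = 0)}"

lemma compact_cube: "compact (cube n)"
proof -
  have "cube n = PiE UNIV (\<lambda>i. if i < n then {0..1} else {0})"
    unfolding cube_def PiE_def Pi_def by (auto simp: not_less)
  then have "compactin (product_topology (\<lambda>i. euclidean) UNIV) (cube n)"
    by (simp add: compactin_PiE)
  then show ?thesis
    by (simp add: euclidean_product_topology)
qed

text \<open>The metric on \<open>nat \<Rightarrow> real\<close> weighs coordinates by powers of \<open>1/2\<close>, hence the tail term.\<close>

lemma dist_fun_le_coordinatewise:
  fixes x y :: "nat \<Rightarrow> real"
  assumes "\<And>i. \<bar>x i - y i\<bar> \<le> c"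
  shows "dist x y \<le> 2 * c + (1/2) ^ N"
proof -
  have "Max {dist (x (from_nat k)) (y (from_nat k)) |k. k \<le> N} \<le> c"
    using assms by (subst Max_le_iff) (auto simp: dist_real_def)
  then show ?thesis
    using dist_fun_le_dist_first_terms[of x y N] by linarith
qed

lemma fixpoint_free_sign_lebesgue_number:
  assumes contG: "continuous_on (cube n) G" and imG: "G ` cube n \<subseteq> cube n"
    and free: "\<And>x. x \<in> cube n \<Longrightarrow> G x \<noteq> x"
  obtains e where "0 < e"
    "\<And>x. x \<in> cube n \<Longrightarrow> \<exists>i<n. (\<forall>y \<in> ball x e \<inter> cube n. y i < G y i)
                                  \<or> (\<forall>y \<in> ball x e \<inter> cube n. G y i < y i)"
proof -
  define \<G> where "\<G> = {W. open W \<and> (\<exists>i<n. (\<forall>y \<in> W \<inter> cube n. y i < G y i)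
                                         \<or> (\<forall>y \<in> W \<inter> cube n. G y i < y i))}"
  have "cube n \<subseteq> \<Union>\<G>"
  proof
    fix z assume z: "z \<in> cube n"
    then obtain i where gi: "G z i \<noteq> z i"
      using free by blast
    moreover have "G z \<in> cube n"
      using imG z by blast
    ultimately have "i < n"
      using z by (cases "i < n") (auto simp: cube_def)
    have "continuous_on (cube n) (\<lambda>y. G y i - y i)"
      using continuous_on_product_then_coordinatewise[OF contG]
        continuous_on_subset[OF continuous_on_product_coordinates]
      by (intro continuous_on_diff) auto
    then obtain A B where "open A" and hA: "A \<inter> cube n = (\<lambda>y. G y i - y i) -` {0<..} \<inter> cube n"
      and "open B" and hB: "B \<inter> cube n = (\<lambda>y. G y i - y i) -` {..<0} \<inter> cube n"
      unfolding continuous_on_open_invariant by (meson open_greaterThan open_lessThan)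
    have "\<forall>y \<in> A \<inter> cube n. y i < G y i" "\<forall>y \<in> B \<inter> cube n. G y i < y i"
      unfolding hA hB by auto
    then have "A \<in> \<G>" "B \<in> \<G>"
      unfolding \<G>_def using \<open>open A\<close> \<open>open B\<close> \<open>i < n\<close> by blast+
    moreover have "z \<in> A \<or> z \<in> B"
      using gi z hA hB by (auto simp: neq_iff)
    ultimately show "z \<in> \<Union>\<G>"
      by blast
  qed
  then obtain e where e: "0 < e" "\<And>x. x \<in> cube n \<Longrightarrow> \<exists>W \<in> \<G>. ball x e \<subseteq> W"
    using Heine_Borel_lemma[OF compact_cube] \<G>_def by blast
  show thesis
  proof (rule that[OF e(1)])
    fix x assume "x \<in> cube n"
    then obtain W where "W \<in> \<G>" "ball x e \<subseteq> W"
      using e(2) by blast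
    then obtain i where "i < n" and sign:
      "(\<forall>y \<in> W \<inter> cube n. y i < G y i) \<or> (\<forall>y \<in> W \<inter> cube n. G y i < y i)"
      unfolding \<G>_def mem_Collect_eq by (elim conjE exE)
    have sub: "ball x e \<inter> cube n \<subseteq> W \<inter> cube n"
      using \<open>ball x e \<subseteq> W\<close> by blast
    from sign show "\<exists>i<n. (\<forall>y \<in> ball x e \<inter> cube n. y i < G y i)
                         \<or> (\<forall>y \<in> ball x e \<inter> cube n. G y i < y i)"
    proof (elim disjE)
      assume "\<forall>y \<in> W \<inter> cube n. y i < G y i"
      then show ?thesis
        using \<open>i < n\<close> sub by (intro exI[of _ i]) blast
    next
      assume "\<forall>y \<in> W \<inter> cube n. G y i < y i"
      then show ?thesis
        using \<open>i < n\<close> sub by (intro exI[of _ i]) blast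
    qed
  qed
qed

definition grid_point :: "nat \<Rightarrow> nat \<Rightarrow> (nat \<Rightarrow> nat) \<Rightarrow> nat \<Rightarrow> real" where
  "grid_point n p k = (\<lambda>j. if j < n then real (k j) / real p else 0)"

lemma grid_point_in_cube:
  assumes "0 < p" "\<forall>j<n. k j \<le> p"
  shows "grid_point n p k \<in> cube n"
  using assms by (auto simp: grid_point_def cube_def)

lemma dist_grid_point_neighbour:
  assumes "\<forall>j<n. k j \<le> l j \<and> l j \<le> k j + 1"
  shows "dist (grid_point n p k) (grid_point n p l) \<le> 2 / real p + (1/2) ^ N"
proof -
  have "\<bar>grid_point n p k j - grid_point n p l j\<bar> \<le> 1 / real p" for j
  proof (cases "j < n")
    case True
    then have "\<bar>real (k j) - real (l j)\<bar> \<le> 1"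
      using assms by auto
    then have "\<bar>real (k j) - real (l j)\<bar> / real p \<le> 1 / real p"
      by (simp add: divide_right_mono)
    then show ?thesis
      using True by (simp add: grid_point_def diff_divide_distrib[symmetric] abs_divide)
  qed (simp add: grid_point_def)
  then show ?thesis
    using dist_fun_le_coordinatewise[of "grid_point n p k" "grid_point n p l" "1 / real p" N]
    by simp
qed

lemma kuhn_lemma_cube:
  assumes "0 < \<delta>"
    and label01: "\<And>y i. y \<in> cube n \<Longrightarrow> i < n \<Longrightarrow> label y i \<le> (1::nat)"
    and label0: "\<And>y i. y \<in> cube n \<Longrightarrow> i < n \<Longrightarrow> y i = 0 \<Longrightarrow> label y i = 0"
    and label1: "\<And>y i. y \<in> cube n \<Longrightarrow> i < n \<Longrightarrow> y i = 1 \<Longrightarrow> label y i = 1"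
  obtains z where "z \<in> cube n"
    "\<And>i. i < n \<Longrightarrow> \<exists>r \<in> ball z \<delta> \<inter> cube n. \<exists>s \<in> ball z \<delta> \<inter> cube n. label r i \<noteq> label s i"
proof -
  obtain N where N: "(1/2::real) ^ N < \<delta> / 2"
    using real_arch_pow_inv[of "\<delta>/2" "1/2::real"] \<open>0 < \<delta>\<close> by auto
  obtain p :: nat where p: "4 / \<delta> < real p"
    using reals_Archimedean2 by blast
  moreover have "0 < 4 / \<delta>"
    using \<open>0 < \<delta>\<close> by simp
  ultimately have "0 < real p"
    by linarith
  then have "0 < p" "2 / real p < \<delta> / 2"
    using p \<open>0 < \<delta>\<close> by (simp_all add: field_simps)
  let ?label = "\<lambda>k. label (grid_point n p k)"
  have grid_label: "(?label k i = 0 \<or> ?label k i = 1) \<and> (k i = 0 \<longrightarrow> ?label k i = 0)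
      \<and> (k i = p \<longrightarrow> ?label k i = 1)" if k: "\<forall>i<n. k i \<le> p" and "i < n" for k i
  proof -
    have g: "grid_point n p k \<in> cube n"
      by (rule grid_point_in_cube[OF \<open>0 < p\<close> k])
    then have "?label k i \<le> 1"
      using label01 \<open>i < n\<close> by blast
    then show ?thesis
      using label0[OF g \<open>i < n\<close>] label1[OF g \<open>i < n\<close>] \<open>i < n\<close> \<open>0 < p\<close>
      by (auto simp: grid_point_def)
  qed
  then have "\<forall>k. (\<forall>i<n. k i \<le> p) \<longrightarrow> (\<forall>i<n. ?label k i = 0 \<or> ?label k i = 1)"
    "\<forall>k. (\<forall>i<n. k i \<le> p) \<longrightarrow> (\<forall>i<n. k i = 0 \<longrightarrow> ?label k i = 0)"
    "\<forall>k. (\<forall>i<n. k i \<le> p) \<longrightarrow> (\<forall>i<n. k i = p \<longrightarrow> ?label k i = 1)"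
    by simp_all
  then obtain q where q: "\<forall>i<n. q i < p" and kuhn:
    "\<forall>i<n. \<exists>r s. (\<forall>j<n. q j \<le> r j \<and> r j \<le> q j + 1) \<and> (\<forall>j<n. q j \<le> s j \<and> s j \<le> q j + 1)
               \<and> ?label r i \<noteq> ?label s i"
    by (rule kuhn_lemma[OF \<open>0 < p\<close>])
  have near: "grid_point n p t \<in> ball (grid_point n p q) \<delta> \<inter> cube n"
    if t: "\<forall>j<n. q j \<le> t j \<and> t j \<le> q j + 1" for t
  proof
    show "grid_point n p t \<in> ball (grid_point n p q) \<delta>"
      using dist_grid_point_neighbour[OF t, of p N] N \<open>2 / real p < \<delta> / 2\<close> by simp
    show "grid_point n p t \<in> cube n"
      using q t by (intro grid_point_in_cube[OF \<open>0 < p\<close>]) (metis Suc_eq_plus1 Suc_leI le_trans)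
  qed
  show thesis
  proof (rule that)
    show "grid_point n p q \<in> cube n"
      using q \<open>0 < p\<close> by (intro grid_point_in_cube) (auto simp: less_imp_le)
    show "\<exists>r \<in> ball (grid_point n p q) \<delta> \<inter> cube n. \<exists>s \<in> ball (grid_point n p q) \<delta> \<inter> cube n.
            label r i \<noteq> label s i" if "i < n" for i
      using kuhn near that by meson
  qed
qed

theorem brouwer_cube_nat:
  assumes contG: "continuous_on (cube n) G" and imG: "G ` cube n \<subseteq> cube n"
  shows "\<exists>x \<in> cube n. G x = x"
proof (rule ccontr)
  assume "\<not> ?thesis"
  then obtain e where "0 < e" and sign:
    "\<And>x. x \<in> cube n \<Longrightarrow> \<exists>i<n. (\<forall>y \<in> ball x e \<inter> cube n. y i < G y i)
                                  \<or> (\<forall>y \<in> ball x e \<inter> cube n. G y i < y i)"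
    using fixpoint_free_sign_lebesgue_number[OF contG imG] by blast
  \<comment> \<open>Off the faces \<open>y i \<in> {0, 1}\<close>, label 1 means that \<open>G\<close> decreases coordinate \<open>i\<close>.\<close>
  define label where "label y i =
    (if y i = 0 then 0 else if y i = 1 then 1 else if y i \<le> G y i then 0 else (1::nat))" for y i
  have G_bounds: "0 \<le> G y i \<and> G y i \<le> 1" if "y \<in> cube n" "i < n" for y i
  proof -
    have "G y \<in> cube n"
      using imG that(1) by blast
    then show ?thesis
      using that(2) by (simp add: cube_def)
  qed
  have label_up: "label y i = 0" if "y \<in> cube n" "i < n" "y i < G y i" for y i
    using G_bounds[OF that(1,2)] that(3) by (auto simp: label_def)
  have label_down: "label y i = 1" if "y \<in> cube n" "i < n" "G y i < y i" for y i
    using G_bounds[OF that(1,2)] that(3) by (auto simp: label_def)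
  obtain z where "z \<in> cube n" and differ:
    "\<And>i. i < n \<Longrightarrow> \<exists>r \<in> ball z e \<inter> cube n. \<exists>s \<in> ball z e \<inter> cube n. label r i \<noteq> label s i"
    by (rule kuhn_lemma_cube[where n = n and label = label, OF \<open>0 < e\<close>]) (auto simp: label_def)
  then obtain i where "i < n" and sign_i:
    "(\<forall>y \<in> ball z e \<inter> cube n. y i < G y i) \<or> (\<forall>y \<in> ball z e \<inter> cube n. G y i < y i)"
    using sign by blast
  then have "label r i = label s i" if "r \<in> ball z e \<inter> cube n" "s \<in> ball z e \<inter> cube n" for r s
    using that label_up label_down by (elim disjE) auto
  then show False
    using differ[OF \<open>i < n\<close>] by blast
qed

lemma standard_simplex_subset_cube: "standard_simplex p \<subseteq> cube (Suc p)"
  by (auto simp: standard_simplex_def cube_def)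

lemma standard_simplex_retract_of_cube:
  obtains r where "continuous_on (cube (Suc p)) r" "r ` cube (Suc p) \<subseteq> standard_simplex p"
    "\<And>x. x \<in> standard_simplex p \<Longrightarrow> r x = x"
proof
  \<comment> \<open>Shift all coordinates by \<open>\<bar>1 - \<Sum>x\<bar>\<close> and renormalise: this keeps them nonnegative and
    fixes the points whose coordinates already sum to 1.\<close>
  define s where "s x = (\<Sum>j\<le>p. x j)" for x :: "nat \<Rightarrow> real"
  define a where "a x = \<bar>1 - s x\<bar>" for x
  define D where "D x = s x + real (Suc p) * a x" for x
  define r where "r x = (\<lambda>j. if j \<le> p then (x j + a x) / D x else 0)" for x
  have s_nonneg: "0 \<le> s x" if "x \<in> cube (Suc p)" for x
    using that unfolding s_def cube_def by (intro sum_nonneg) auto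
  have D_pos: "0 < D x" if "x \<in> cube (Suc p)" for x
  proof (cases "s x = 0")
    case False
    then show ?thesis
      using s_nonneg[OF that] by (simp add: D_def a_def add_pos_nonneg)
  qed (simp add: D_def a_def)
  have coord: "continuous_on (cube (Suc p)) (\<lambda>x. x j)" for j
    by (rule continuous_on_subset[OF continuous_on_product_coordinates]) simp
  have cont_s: "continuous_on (cube (Suc p)) s"
    unfolding s_def[abs_def] by (intro continuous_intros coord)
  then have cont_a: "continuous_on (cube (Suc p)) a"
    unfolding a_def[abs_def] by (intro continuous_intros)
  have cont_D: "continuous_on (cube (Suc p)) D"
    unfolding D_def[abs_def] by (intro continuous_intros cont_s cont_a)
  show "continuous_on (cube (Suc p)) r"
    unfolding r_def
  proof (rule continuous_on_coordinatewise_then_product)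
    fix j
    show "continuous_on (cube (Suc p)) (\<lambda>x. if j \<le> p then (x j + a x) / D x else 0)"
      using D_pos by (cases "j \<le> p") (auto intro!: continuous_intros coord cont_a cont_D
          simp: less_le)
  qed
  show "r ` cube (Suc p) \<subseteq> standard_simplex p"
  proof clarify
    fix x assume x: "x \<in> cube (Suc p)"
    have nonneg: "0 \<le> r x j" for j
      using x D_pos[OF x] by (auto simp: r_def a_def cube_def)
    have "(\<Sum>j\<le>p. x j + a x) = D x"
      by (simp add: sum.distrib s_def D_def)
    then have sum1: "(\<Sum>j\<le>p. r x j) = 1"
      using D_pos[OF x] by (simp add: r_def sum_divide_distrib[symmetric])
    have "r x j \<le> 1" for j
    proof (cases "j \<le> p")
      case True
      then show ?thesis
        using sum1 nonneg member_le_sum[of j "{..p}" "r x"] by simp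
    qed (simp add: r_def)
    then show "r x \<in> standard_simplex p"
      using nonneg sum1 by (auto simp: standard_simplex_def r_def)
  qed
  show "r x = x" if "x \<in> standard_simplex p" for x
    using that by (auto simp: standard_simplex_def r_def a_def D_def s_def)
qed

theorem brouwer_standard_simplex:
  assumes contG: "continuous_on (standard_simplex p) G"
    and imG: "G ` standard_simplex p \<subseteq> standard_simplex p"
  shows "\<exists>x \<in> standard_simplex p. G x = x"
proof -
  obtain r where contr: "continuous_on (cube (Suc p)) r" and imr: "r ` cube (Suc p) \<subseteq> standard_simplex p"
    and retr: "\<And>x. x \<in> standard_simplex p \<Longrightarrow> r x = x"
    using standard_simplex_retract_of_cube by blast
  have cont: "continuous_on (cube (Suc p)) (G \<circ> r)"
    by (rule continuous_on_compose[OF contr continuous_on_subset[OF contG imr]])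
  have simplex: "G (r x) \<in> standard_simplex p" if "x \<in> cube (Suc p)" for x
    using subsetD[OF imG imageI[OF subsetD[OF imr imageI[OF that]]]] .
  then have "(G \<circ> r) ` cube (Suc p) \<subseteq> cube (Suc p)"
    using standard_simplex_subset_cube by auto
  then obtain x where "x \<in> cube (Suc p)" and fix_x: "G (r x) = x"
    using brouwer_cube_nat[OF cont] by auto
  then have "x \<in> standard_simplex p"
    using simplex by metis
  then show ?thesis
    using fix_x retr by auto
qed

lemma continuous_map_tvs_add:
  assumes "tvs tau" "continuous_map X tau g" "continuous_map X tau h"
  shows "continuous_map X tau (\<lambda>x. g x + h x)"
proof -
  have "continuous_map X tau ((\<lambda>(x, y). x + y) \<circ> (\<lambda>x. (g x, h x)))"
    using assms by (intro continuous_map_compose[OF continuous_map_pairedI]) (auto simp: tvs_def)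
  then show ?thesis
    by (simp add: o_def)
qed

lemma continuous_map_tvs_scaleR:
  assumes "tvs tau" "continuous_map X euclideanreal a" "continuous_map X tau g"
  shows "continuous_map X tau (\<lambda>x. a x *\<^sub>R g x)"
proof -
  have "continuous_map X tau ((\<lambda>(a, x). a *\<^sub>R x) \<circ> (\<lambda>x. (a x, g x)))"
    using assms by (intro continuous_map_compose[OF continuous_map_pairedI]) (auto simp: tvs_def)
  then show ?thesis
    by (simp add: o_def)
qed

lemma continuous_map_tvs_sum:
  assumes "tvs tau" "\<And>i. i \<in> I \<Longrightarrow> continuous_map X tau (g i)"
  shows "continuous_map X tau (\<lambda>x. \<Sum>i\<in>I. g i x)"
  using assms(2)
proof (induction I rule: infinite_finite_induct)
  case (insert i I)
  then show ?case
    by (simp add: continuous_map_tvs_add[OF assms(1)])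
qed (use assms(1) in \<open>simp_all add: tvs_def\<close>)

section \<open>The pseudometric of finitely many functionals\<close>

definition dual_dist :: "('a \<Rightarrow> real) set \<Rightarrow> 'a \<Rightarrow> 'a \<Rightarrow> real" where
  "dual_dist V x y = (\<Sum>v\<in>V. \<bar>v x - v y\<bar>)"

lemma dual_dist_commute: "dual_dist V x y = dual_dist V y x"
  by (simp add: dual_dist_def abs_minus_commute)

lemma continuous_map_dual_dist:
  assumes "finite V" "V \<subseteq> dual_space tau" "continuous_map X tau g" "continuous_map X tau h"
  shows "continuous_map X euclideanreal (\<lambda>x. dual_dist V (g x) (h x))"
proof -
  have "continuous_map X euclideanreal (v \<circ> g)" "continuous_map X euclideanreal (v \<circ> h)"
    if "v \<in> V" for v
    using that assms(2-4) by (auto intro: continuous_map_compose simp: dual_space_def)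
  then show ?thesis
    unfolding dual_dist_def using assms(1)
    by (intro continuous_map_sum continuous_map_real_abs continuous_map_diff) (auto simp: o_def)
qed

lemma dual_dist_convex_combination_le:
  assumes "\<And>v. v \<in> V \<Longrightarrow> linear v" "q \<in> standard_simplex p"
  shows "dual_dist V (\<Sum>j\<le>p. q j *\<^sub>R z j) y \<le> (\<Sum>j\<le>p. q j * dual_dist V (z j) y)"
proof -
  have q: "\<And>j. 0 \<le> q j" "(\<Sum>j\<le>p. q j) = 1"
    using assms(2) by (auto simp: standard_simplex_def)
  have "\<bar>v (\<Sum>j\<le>p. q j *\<^sub>R z j) - v y\<bar> \<le> (\<Sum>j\<le>p. q j * \<bar>v (z j) - v y\<bar>)" if "v \<in> V" for v
  proof -
    have "v (\<Sum>j\<le>p. q j *\<^sub>R z j) - v y = (\<Sum>j\<le>p. q j * (v (z j) - v y))"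
      using assms(1)[OF that] q(2)
      by (simp add: linear_sum linear_scale right_diff_distrib sum_subtractf sum_distrib_right[symmetric])
    also have "\<bar>\<dots>\<bar> \<le> (\<Sum>j\<le>p. q j * \<bar>v (z j) - v y\<bar>)"
      using q(1) by (intro order_trans[OF sum_abs]) (simp add: abs_mult)
    finally show ?thesis .
  qed
  then show ?thesis
    unfolding dual_dist_def by (simp add: sum_mono sum.swap[of _ V] sum_distrib_left)
qed

lemma fixpoint_free_separated_by_finitely_many:
  assumes "point_separable tau" "compactin tau C"
    and contf: "continuous_map (subtopology tau C) tau f" and free: "\<And>x. x \<in> C \<Longrightarrow> f x \<noteq> x"
  obtains W where "finite W" "W \<subseteq> dual_space tau" "\<And>x. x \<in> C \<Longrightarrow> 0 < dual_dist W x (f x)"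
proof -
  obtain V where V: "V \<subseteq> dual_space tau" and sep: "\<And>x. \<forall>v\<in>V. v x = 0 \<Longrightarrow> x = 0"
    using assms(1) by (auto simp: point_separable_def)
  define U where "U v = {x \<in> topspace (subtopology tau C). v x - v (f x) \<in> - {0}}" for v :: "'a \<Rightarrow> real"
  have "openin (subtopology tau C) (U v)" if "v \<in> V" for v
  proof -
    have "continuous_map tau euclideanreal v"
      using V that by (auto simp: dual_space_def)
    then have "continuous_map (subtopology tau C) euclideanreal (\<lambda>x. v x - v (f x))"
      by (intro continuous_map_diff continuous_map_from_subtopology
          continuous_map_compose[OF contf, unfolded o_def])
    then show ?thesis
      unfolding U_def by (rule openin_continuous_map_preimage) auto
  qed
  moreover have "C \<subseteq> \<Union> (U ` V)"
  proof
    fix x assume "x \<in> C"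
    then obtain v where "v \<in> V" "v (x - f x) \<noteq> 0"
      using free sep by (metis eq_iff_diff_eq_0)
    moreover from this have "linear v"
      using V by (auto simp: dual_space_def)
    ultimately have "v x \<noteq> v (f x)"
      by (simp add: linear_diff)
    then show "x \<in> \<Union> (U ` V)"
      using \<open>v \<in> V\<close> \<open>x \<in> C\<close> compactin_subset_topspace[OF assms(2)] by (auto simp: U_def)
  qed
  ultimately obtain \<F> where "finite \<F>" "\<F> \<subseteq> U ` V" "C \<subseteq> \<Union> \<F>"
    using compactinD[of "subtopology tau C" C "U ` V"] assms(2) by auto
  then obtain W where W: "W \<subseteq> V" "finite W" "C \<subseteq> \<Union> (U ` W)"
    by (metis finite_subset_image)
  have "0 < dual_dist W x (f x)" if x: "x \<in> C" for x
  proof -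
    obtain v where "v \<in> W" "v x \<noteq> v (f x)"
      using W(3) x by (auto simp: U_def)
    then have "0 < \<bar>v x - v (f x)\<bar>"
      by simp
    also have "\<dots> \<le> dual_dist W x (f x)"
      unfolding dual_dist_def using \<open>v \<in> W\<close> W(2) by (intro member_le_sum) auto
    finally show ?thesis .
  qed
  then show ?thesis
    using that W V by blast
qed

lemma compactin_positive_lower_bound:
  assumes "compactin X S" "continuous_map (subtopology X S) euclideanreal h"
    and "\<And>x. x \<in> S \<Longrightarrow> 0 < h x"
  obtains e where "0 < e" "\<And>x. x \<in> S \<Longrightarrow> e \<le> h x"
proof (cases "S = {}")
  case False
  have "compactin euclideanreal (h ` S)"
    using image_compactin[OF _ assms(2)] assms(1) by simp
  then obtain m where "m \<in> h ` S" "\<And>y. y \<in> h ` S \<Longrightarrow> m \<le> y"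
    using compact_attains_inf[of "h ` S"] False by auto
  then show ?thesis
    using that assms(3) by blast
qed (rule that[of 1], auto)

section \<open>Approximate fixed points\<close>

lemma compact_space_finite_net:
  assumes "compact_space X" "topspace X \<noteq> {}"
    and "\<And>z. continuous_map X euclideanreal (\<lambda>y. d y z)" "\<And>y. y \<in> topspace X \<Longrightarrow> d y y < \<epsilon>"
  obtains p :: nat and z where "\<And>j. j \<le> p \<Longrightarrow> z j \<in> topspace X"
    "\<And>y. y \<in> topspace X \<Longrightarrow> \<exists>j\<le>p. d y (z j) < \<epsilon>"
proof -
  define N where "N z = {y \<in> topspace X. d y z \<in> {..<\<epsilon>}}" for z
  have "openin X (N z)" for z
    unfolding N_def by (rule openin_continuous_map_preimage[OF assms(3)]) simp
  moreover have "topspace X \<subseteq> \<Union> (N ` topspace X)"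
    using assms(4) by (auto simp: N_def)
  ultimately obtain \<F> where "finite \<F>" "\<F> \<subseteq> N ` topspace X" "topspace X \<subseteq> \<Union> \<F>"
    using compactinD[of X "topspace X" "N ` topspace X"] assms(1) by (auto simp: compact_space_def)
  then obtain Z where Z: "Z \<subseteq> topspace X" "finite Z" "topspace X \<subseteq> \<Union> (N ` Z)"
    by (metis finite_subset_image)
  then obtain n :: nat and z where n: "Z = z ` {i. i < n}"
    using finite_conv_nat_seg_image[of Z] by blast
  with Z(3) assms(2) have "0 < n"
    by (cases n) auto
  then have Z_eq: "Z = z ` {..n - 1}"
    using n by (simp add: lessThan_def[symmetric] lessThan_Suc_atMost[symmetric])
  show ?thesis
  proof (rule that)
    show "z j \<in> topspace X" if "j \<le> n - 1" for j
      using Z(1) Z_eq that by blast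
    show "\<exists>j\<le>n - 1. d y (z j) < \<epsilon>" if "y \<in> topspace X" for y
      using Z(3) Z_eq that by (auto simp: N_def)
  qed
qed

lemma partition_of_unity_subordinate:
  assumes "compact_space X" "topspace X \<noteq> {}"
    and contd: "\<And>z. continuous_map X euclideanreal (\<lambda>y. d y z)"
    and "\<And>y. y \<in> topspace X \<Longrightarrow> d y y < \<epsilon>"
  obtains p :: nat and z and \<phi> :: "'a \<Rightarrow> nat \<Rightarrow> real"
  where "\<And>j. j \<le> p \<Longrightarrow> z j \<in> topspace X" "continuous_map X euclidean \<phi>"
    "\<And>y. y \<in> topspace X \<Longrightarrow> \<phi> y \<in> standard_simplex p"
    "\<And>y j. y \<in> topspace X \<Longrightarrow> \<phi> y j \<noteq> 0 \<Longrightarrow> d y (z j) < \<epsilon>"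
proof -
  obtain p :: nat and z where z: "\<And>j. j \<le> p \<Longrightarrow> z j \<in> topspace X"
    and net: "\<And>y. y \<in> topspace X \<Longrightarrow> \<exists>j\<le>p. d y (z j) < \<epsilon>"
    using compact_space_finite_net[OF assms] by blast
  define \<psi> where "\<psi> j y = max 0 (\<epsilon> - d y (z j))" for j y
  define S where "S y = (\<Sum>j\<le>p. \<psi> j y)" for y
  define \<phi> where "\<phi> y j = (if j \<le> p then \<psi> j y / S y else 0)" for y j
  have \<psi>_nonneg: "0 \<le> \<psi> j y" for j y
    by (simp add: \<psi>_def)
  have S_pos: "0 < S y" if y: "y \<in> topspace X" for y
  proof -
    obtain j where "j \<le> p" "d y (z j) < \<epsilon>"
      using net[OF y] by blast
    then have "0 < \<psi> j y"
      by (simp add: \<psi>_def)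
    also have "\<dots> \<le> S y"
      unfolding S_def using \<open>j \<le> p\<close> \<psi>_nonneg by (intro member_le_sum) auto
    finally show ?thesis .
  qed
  have cont_\<psi>: "continuous_map X euclideanreal (\<psi> j)" for j
    unfolding \<psi>_def[abs_def] by (intro continuous_intros contd)
  then have "continuous_map X euclideanreal S"
    unfolding S_def[abs_def] by (intro continuous_intros) auto
  then have "continuous_map X euclideanreal (\<lambda>y. \<phi> y j)" for j
    unfolding \<phi>_def using cont_\<psi> S_pos by (cases "j \<le> p") (auto intro!: continuous_intros simp: less_le)
  then have "continuous_map X euclidean \<phi>"
    by (simp flip: euclidean_product_topology add: continuous_map_componentwise_UNIV)
  moreover have "\<phi> y \<in> standard_simplex p" if "y \<in> topspace X" for y
  proof -
    have sum1: "(\<Sum>j\<le>p. \<phi> y j) = 1"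
      using S_pos[OF that] by (simp add: \<phi>_def S_def sum_divide_distrib[symmetric])
    have nonneg: "0 \<le> \<phi> y j" for j
      using S_pos[OF that] \<psi>_nonneg by (simp add: \<phi>_def)
    moreover have "\<phi> y j \<le> 1" for j
    proof (cases "j \<le> p")
      case True
      then have "\<phi> y j \<le> (\<Sum>i\<le>p. \<phi> y i)"
        using nonneg by (intro member_le_sum) auto
      then show ?thesis
        using sum1 by simp
    qed (simp add: \<phi>_def)
    ultimately show ?thesis
      using sum1 by (simp add: standard_simplex_def \<phi>_def)
  qed
  moreover have "d y (z j) < \<epsilon>" if "\<phi> y j \<noteq> 0" for y j
    using that by (auto simp: \<phi>_def \<psi>_def split: if_splits)
  ultimately show ?thesis
    using that z by blast
qed

lemma approximate_fixed_point:
  assumes tvs: "tvs tau" and "compactin tau C" "convex C" "C \<noteq> {}"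
    and imf: "f ` C \<subseteq> C" and contf: "continuous_map (subtopology tau C) tau f"
    and V: "finite V" "V \<subseteq> dual_space tau" and "0 < \<epsilon>"
  obtains x where "x \<in> C" "dual_dist V x (f x) \<le> \<epsilon>"
proof -
  let ?X = "subtopology tau C"
  have top: "topspace ?X = C"
    using tvs by (simp add: tvs_def)
  have cont_dist: "continuous_map ?X euclideanreal (\<lambda>y. dual_dist V y z)" for z
    using tvs by (intro continuous_map_dual_dist[OF V] continuous_map_from_subtopology)
      (auto simp: tvs_def)
  have diag: "dual_dist V y y < \<epsilon>" for y
    using \<open>0 < \<epsilon>\<close> by (simp add: dual_dist_def)
  obtain p :: nat and z and \<phi> :: "'a \<Rightarrow> nat \<Rightarrow> real"
    where z: "\<And>j. j \<le> p \<Longrightarrow> z j \<in> C" and cont\<phi>: "continuous_map ?X euclidean \<phi>"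
      and \<phi>_simplex: "\<And>y. y \<in> C \<Longrightarrow> \<phi> y \<in> standard_simplex p"
      and \<phi>_local: "\<And>y j. y \<in> C \<Longrightarrow> \<phi> y j \<noteq> 0 \<Longrightarrow> dual_dist V y (z j) < \<epsilon>"
    using partition_of_unity_subordinate[of ?X "dual_dist V" \<epsilon>, unfolded top,
        OF compact_space_subtopology[OF \<open>compactin tau C\<close>] \<open>C \<noteq> {}\<close> cont_dist diag]
    by blast
  define B where "B q = (\<Sum>j\<le>p. q j *\<^sub>R z j)" for q
  have B_in: "B q \<in> C" if "q \<in> standard_simplex p" for q
    unfolding B_def using that z \<open>convex C\<close> by (intro convex_sum) (auto simp: standard_simplex_def)
  have "continuous_map (top_of_set (standard_simplex p)) tau B"
    unfolding B_def using tvs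
    by (intro continuous_map_tvs_sum continuous_map_tvs_scaleR)
      (auto simp: tvs_def intro: continuous_on_subset[OF continuous_on_product_coordinates])
  then have "continuous_map (top_of_set (standard_simplex p)) ?X B"
    using B_in by (auto intro: continuous_map_into_subtopology)
  moreover have "continuous_map ?X ?X f"
    using contf imf top by (intro continuous_map_into_subtopology) auto
  ultimately have "continuous_map (top_of_set (standard_simplex p)) euclidean (\<phi> \<circ> f \<circ> B)"
    using cont\<phi> by (intro continuous_map_compose)
  then have "continuous_on (standard_simplex p) (\<phi> \<circ> f \<circ> B)"
    by simp
  moreover have "(\<phi> \<circ> f \<circ> B) ` standard_simplex p \<subseteq> standard_simplex p"
    using B_in imf \<phi>_simplex by auto
  ultimately obtain q where q: "q \<in> standard_simplex p" "\<phi> (f (B q)) = q"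
    using brouwer_standard_simplex by fastforce
  define x where "x = B q"
  have "x \<in> C" "f x \<in> C"
    using B_in[OF q(1)] imf by (auto simp: x_def)
  have "dual_dist V x (f x) \<le> (\<Sum>j\<le>p. q j * dual_dist V (z j) (f x))"
    unfolding x_def B_def
    using V(2) q(1) by (intro dual_dist_convex_combination_le) (auto simp: dual_space_def)
  also have "\<dots> \<le> (\<Sum>j\<le>p. q j * \<epsilon>)"
  proof (rule sum_mono)
    fix j
    have "0 \<le> q j"
      using q(1) by (simp add: standard_simplex_def)
    moreover have "dual_dist V (z j) (f x) < \<epsilon>" if "q j \<noteq> 0"
      using \<phi>_local[OF \<open>f x \<in> C\<close>] that q(2) by (simp add: x_def dual_dist_commute)
    ultimately show "q j * dual_dist V (z j) (f x) \<le> q j * \<epsilon>"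
      by (cases "q j = 0") (auto intro: mult_left_mono)
  qed
  also have "\<dots> = \<epsilon>"
    using q(1) by (simp add: standard_simplex_def sum_distrib_right[symmetric])
  finally show ?thesis
    using that \<open>x \<in> C\<close> by blast
qed

theorem theorem4p3:
  fixes tau :: "'a::real_vector topology"
  assumes "tvs tau" and "point_separable tau"
  shows "\<forall>C f. C \<noteq> {} \<and> compactin tau C \<and> convex C
            \<and> f ` C \<subseteq> C \<and> continuous_map (subtopology tau C) tau f
          \<longrightarrow> (\<exists>x0\<in>C. f x0 = x0)"
proof (intro allI impI; elim conjE)
  fix C and f :: "'a \<Rightarrow> 'a"
  assume C: "C \<noteq> {}" "compactin tau C" "convex C"
    and f: "f ` C \<subseteq> C" "continuous_map (subtopology tau C) tau f"
  show "\<exists>x0\<in>C. f x0 = x0"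
  proof (rule ccontr)
    assume "\<not> ?thesis"
    then obtain W where W: "finite W" "W \<subseteq> dual_space tau"
      and pos: "\<And>x. x \<in> C \<Longrightarrow> 0 < dual_dist W x (f x)"
      using fixpoint_free_separated_by_finitely_many[OF assms(2) C(2) f(2)] by blast
    have "continuous_map (subtopology tau C) euclideanreal (\<lambda>x. dual_dist W x (f x))"
      using continuous_map_id_subt[of tau C]
      by (intro continuous_map_dual_dist[OF W] f(2)) (simp add: id_def)
    then obtain e where "0 < e" and bound: "\<And>x. x \<in> C \<Longrightarrow> e \<le> dual_dist W x (f x)"
      using compactin_positive_lower_bound[OF C(2)] pos by blast
    obtain x where "x \<in> C" "dual_dist W x (f x) \<le> e / 2"
      using approximate_fixed_point[OF assms(1) C(2,3,1) f W, of "e / 2"] \<open>0 < e\<close> by auto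
    with bound[of x] \<open>0 < e\<close> show False
      by simp
  qed
qed

end
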